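(* With the notation of the context, suppose there are two sample points $\bm x_\alpha,\bm x_\beta$ such that $$\max_{j\in J_{\leq,\alpha}}u_j(\bm x_\beta)<u^*(\bm x_\beta)=u_\beta(\bm x_\beta).$$ Then there exists a point $\bm x_\gamma\in\mathcal{L}(\bm x_\alpha,\bm x_\beta)=\{\lambda\bm x_\alpha+(1-\lambda)\bm x_\beta:\lambda\in(0,1)\}$ and an affine local piece $u_\gamma$ of $u^*$ with $u^*(\bm x_\gamma)=u_\gamma(\bm x_\gamma)$ such that $$u_\gamma(\bm x_\alpha)\le u_\alpha(\bm x_\alpha),\qquad u_\gamma(\bm x_\beta)\ge u_\beta(\bm x_\beta).$$ Moreover, after adding $(\bm x_\gamma,u_\gamma)$ to the sample set (and recomputing $J_{\leq,\alpha}$ accordingly), $\max_{j\in J_{\leq,\alpha}}u_j(\bm x_\beta)\ge u_\beta(\bm x_\beta)$.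
   Context: Let $\Omega\subseteq\mathbb{R}^{n_x}$ be a convex polyhedron and $u^*:\Omega\to\mathbb{R}$ a continuous piecewise affine (PWA) function: $\Omega$ is the union of finitely many closed convex polyhedra (local regions) with pairwise disjoint interiors, and on each local region $u^*$ coincides with an affine function (its local piece). Sample points $\bm x_1,\dots,\bm x_{N_s}\in\Omega$ are given, each lying in the interior of a unique order (UO) region $\Gamma(\bm x_i)$ (a closed polyhedron inside a local region on whose interior the order of all distinct local pieces of $u^*$ is constant), and $u_i$ denotes the local piece of $u^*$ on $\Gamma(\bm x_i)$, so $u_i(\bm x_i)=u^*(\bm x_i)$. Define $J_{\leq,i}=\{j: u_j(\bm x_i)\le u_i(\bm x_i)\}$, where $j$ ranges over the indices of all current sample points. *)

theory Defs
  imports "HOL-Analysis.Analysis"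
begin

definition affine_fun :: "('a::euclidean_space \<Rightarrow> real) \<Rightarrow> bool" where
  "affine_fun f \<longleftrightarrow> (\<exists>a b. \<forall>x. f x = inner a x + b)"

definition pwa_on ::
  "'a::euclidean_space set \<Rightarrow> ('a \<Rightarrow> real) \<Rightarrow> nat \<Rightarrow> (nat \<Rightarrow> 'a set) \<Rightarrow> (nat \<Rightarrow> 'a \<Rightarrow> real) \<Rightarrow> bool"
  where
  "pwa_on \<Omega> u K Rg pc \<longleftrightarrow>
     continuous_on \<Omega> u \<and>
     (\<Union>i<K. Rg i) = \<Omega> \<and>
     (\<forall>i<K. polyhedron (Rg i) \<and> closed (Rg i) \<and> convex (Rg i)) \<and>
     (\<forall>i<K. \<forall>j<K. i \<noteq> j \<longrightarrow> interior (Rg i) \<inter> interior (Rg j) = {}) \<and>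
     (\<forall>i<K. affine_fun (pc i) \<and> (\<forall>x\<in>Rg i. u x = pc i x))"

definition uo_region ::
  "nat \<Rightarrow> (nat \<Rightarrow> 'a::euclidean_space set) \<Rightarrow> (nat \<Rightarrow> 'a \<Rightarrow> real) \<Rightarrow> 'a set \<Rightarrow> bool" where
  "uo_region K Rg pc G \<longleftrightarrow>
     polyhedron G \<and> closed G \<and> (\<exists>k<K. G \<subseteq> Rg k) \<and>
     (\<forall>p<K. \<forall>q<K. \<forall>x\<in>interior G. \<forall>y\<in>interior G.
        sgn (pc p x - pc q x) = sgn (pc p y - pc q y))"

definition J_le :: "nat \<Rightarrow> (nat \<Rightarrow> 'a) \<Rightarrow> (nat \<Rightarrow> 'a \<Rightarrow> real) \<Rightarrow> nat \<Rightarrow> nat set" where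
  "J_le N xs us i = {j. j < N \<and> us j (xs i) \<le> us i (xs i)}"

end

theory Submission
  imports Defs
begin

text \<open>Follow u along the segment from x_beta (t = 0) to x_alpha (t = 1) and compare it with
  the chord through its end values. Near x_alpha, u coincides with u_alpha, which lies
  below u at x_beta; so u dips strictly below the chord there, while it meets the chord at
  t = 0. The last point where u is still on or above the chord before the dip, together with
  points just after it, lies in a single closed local region; the piece of that region is an
  affine function of t that is nonnegative and then negative relative to the chord, hence it
  lies below u at x_alpha and above u at x_beta. Adding it as a sample puts it into
  J_le(alpha) and raises the maximum at x_beta to at least u_beta(x_beta).\<close>

lemma affine_fun_convex_comb:
  assumes "affine_fun f"
  shows "f (t *\<^sub>R x + (1 - t) *\<^sub>R y) = t * f x + (1 - t) * f y"
proof -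
  obtain a b where "\<And>x. f x = inner a x + b" using assms unfolding affine_fun_def by blast
  then show ?thesis by (simp add: inner_add_right algebra_simps)
qed

lemma closed_cover_sign_change:
  fixes f :: "real \<Rightarrow> real" and C :: "'i \<Rightarrow> real set"
  assumes "finite I" and closed: "\<And>i. i \<in> I \<Longrightarrow> closed (C i)"
    and cover: "{a..b} \<subseteq> (\<Union>i\<in>I. C i)" and "continuous_on {a..b} f"
    and "a \<le> b" and "0 \<le> f a" and "f b < 0"
  shows "\<exists>i\<in>I. \<exists>s t. a \<le> s \<and> s < t \<and> t \<le> b \<and> s \<in> C i \<and> t \<in> C i \<and> 0 \<le> f s \<and> f t < 0"
proof -
  define T where "T = {a..b} \<inter> f -` {0..}"
  have "compact T"
    unfolding T_def compact_eq_bounded_closed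
    using assms(4) by (auto intro: continuous_closed_preimage bounded_Int)
  moreover have "a \<in> T" using assms unfolding T_def by auto
  ultimately obtain s where "s \<in> T" and s_max: "\<And>t. t \<in> T \<Longrightarrow> t \<le> s"
    using compact_attains_sup by (metis empty_iff)
  then have s: "a \<le> s" "s \<le> b" "0 \<le> f s" unfolding T_def by auto
  with \<open>f b < 0\<close> have "s < b" by (cases "s = b") auto
  \<comment> \<open>s is the last zero-or-above point; cover sets missing s keep a positive distance from it\<close>
  define Far where "Far = (\<Union>i\<in>{i\<in>I. s \<notin> C i}. C i)"
  have "closed Far" unfolding Far_def using assms(1) closed by (intro closed_UN) auto
  moreover have "s \<notin> Far" unfolding Far_def by auto
  ultimately obtain \<delta> where "\<delta> > 0" and \<delta>: "ball s \<delta> \<inter> Far = {}"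
    by (metis ComplI open_Compl open_contains_ball disjoint_eq_subset_Compl)
  define t where "t = min (s + \<delta>/2) b"
  have t: "s < t" "t \<le> b" "t \<in> ball s \<delta>"
    using \<open>\<delta> > 0\<close> \<open>s < b\<close> unfolding t_def by (auto simp: dist_real_def)
  then have "t \<notin> T" using s_max by force
  with t s have "f t < 0" unfolding T_def by auto
  have "t \<in> {a..b}" using s t by auto
  then obtain i where "i \<in> I" "t \<in> C i" using cover by blast
  moreover from this have "s \<in> C i" using \<delta> t(3) unfolding Far_def by blast
  ultimately show ?thesis using s t \<open>f t < 0\<close> by blast
qed

lemma affine_sign_change_endpoints:
  fixes A B s t :: real
  assumes "0 \<le> s" "s < t" "t \<le> 1"
    and "0 \<le> s * A + (1 - s) * B" and "t * A + (1 - t) * B < 0"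
  shows "A < 0" and "0 \<le> B"
proof -
  have "(t - s) * (A - B) < 0" using assms(4,5) by (simp add: algebra_simps)
  with \<open>s < t\<close> have "A < B" by (simp add: mult_less_0_iff)
  have "A = t * A + (1 - t) * B + (1 - t) * (A - B)" by (simp add: algebra_simps)
  moreover have "(1 - t) * (A - B) \<le> 0" using \<open>t \<le> 1\<close> \<open>A < B\<close> by (simp add: mult_nonneg_nonpos)
  ultimately show "A < 0" using assms(5) by linarith
  have "B = s * A + (1 - s) * B - s * (A - B)" by (simp add: algebra_simps)
  moreover have "s * (A - B) \<le> 0" using \<open>0 \<le> s\<close> \<open>A < B\<close> by (simp add: mult_nonneg_nonpos)
  ultimately show "0 \<le> B" using assms(4) by linarith
qed

lemma pwa_below_chord_imp_crossing_piece:
  assumes pwa: "pwa_on \<Omega> u K Rg pc" and "convex \<Omega>" and "a \<in> \<Omega>" and "b \<in> \<Omega>"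
    and "0 < t\<^sub>0" and "t\<^sub>0 < 1"
    and below: "u (t\<^sub>0 *\<^sub>R a + (1 - t\<^sub>0) *\<^sub>R b) < t\<^sub>0 * u a + (1 - t\<^sub>0) * u b"
  shows "\<exists>t k. 0 < t \<and> t < 1 \<and> k < K \<and> t *\<^sub>R a + (1 - t) *\<^sub>R b \<in> Rg k \<and>
           pc k a < u a \<and> u b \<le> pc k b"
proof -
  define p where "p t = t *\<^sub>R a + (1 - t) *\<^sub>R b" for t :: real
  define d where "d t = u (p t) - (t * u a + (1 - t) * u b)" for t
  have p_in: "p t \<in> \<Omega>" if "t \<in> {0..t\<^sub>0}" for t
    unfolding p_def using that assms(2-6) by (intro convexD) auto
  have cont_p: "continuous_on UNIV p" unfolding p_def by (intro continuous_intros)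
  have "continuous_on {0..t\<^sub>0} (u \<circ> p)"
    using pwa p_in unfolding pwa_on_def
    by (intro continuous_on_compose continuous_on_subset[OF cont_p]) (auto intro: continuous_on_subset)
  then have "continuous_on {0..t\<^sub>0} d" unfolding d_def o_def by (intro continuous_intros)
  moreover have "{0..t\<^sub>0} \<subseteq> (\<Union>k\<in>{..<K}. {0..t\<^sub>0} \<inter> p -` Rg k)"
    using pwa p_in unfolding pwa_on_def by blast
  moreover have "closed ({0..t\<^sub>0} \<inter> p -` Rg k)" if "k \<in> {..<K}" for k
    using pwa that unfolding pwa_on_def
    by (intro continuous_closed_preimage continuous_on_subset[OF cont_p]) auto
  moreover have "d 0 = 0" "d t\<^sub>0 < 0" using below unfolding d_def p_def by auto
  ultimately obtain k s t where k: "k < K" and st: "0 \<le> s" "s < t" "t \<le> t\<^sub>0"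
      and in_Rg: "p s \<in> Rg k" "p t \<in> Rg k" and sign: "0 \<le> d s" "d t < 0"
    using closed_cover_sign_change[of "{..<K}" "\<lambda>k. {0..t\<^sub>0} \<inter> p -` Rg k" 0 t\<^sub>0 d] \<open>0 < t\<^sub>0\<close>
    by auto
  have d_piece: "d r = r * (pc k a - u a) + (1 - r) * (pc k b - u b)" if "p r \<in> Rg k" for r
    using pwa k that affine_fun_convex_comb[of "pc k" r a b]
    unfolding pwa_on_def d_def p_def by (simp add: algebra_simps)
  have "pc k a - u a < 0" "0 \<le> pc k b - u b"
    using affine_sign_change_endpoints[OF st(1,2), of "pc k a - u a" "pc k b - u b"]
      st(3) \<open>t\<^sub>0 < 1\<close> sign d_piece[OF in_Rg(1)] d_piece[OF in_Rg(2)] by simp_all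
  then show ?thesis using k st in_Rg \<open>t\<^sub>0 < 1\<close> unfolding p_def by (intro exI[of _ t] exI[of _ k]) auto
qed

lemma interior_contains_segment_point:
  fixes x y :: "'a::real_normed_vector"
  assumes "x \<in> interior S"
  shows "\<exists>t. 0 < t \<and> t < 1 \<and> t *\<^sub>R x + (1 - t) *\<^sub>R y \<in> S"
proof -
  have "((\<lambda>t. t *\<^sub>R x + (1 - t) *\<^sub>R y) \<longlongrightarrow> 1 *\<^sub>R x + (1 - 1) *\<^sub>R y) (at_left (1::real))"
    by (intro tendsto_intros)
  then have "\<forall>\<^sub>F t in at_left 1. t *\<^sub>R x + (1 - t) *\<^sub>R y \<in> interior S"
    using assms by (auto intro: topological_tendstoD)
  moreover have "\<forall>\<^sub>F t in at_left (1::real). t \<in> {0<..<1}"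
    by (rule eventually_at_left_real) simp
  ultimately have "\<forall>\<^sub>F t in at_left 1. t \<in> {0<..<1} \<and> t *\<^sub>R x + (1 - t) *\<^sub>R y \<in> interior S"
    by eventually_elim auto
  then have "\<exists>t. t \<in> {0<..<1} \<and> t *\<^sub>R x + (1 - t) *\<^sub>R y \<in> interior S"
    using eventually_happens trivial_limit_at_left_real by blast
  then show ?thesis using interior_subset by auto
qed

lemma J_le_Max_ge:
  assumes "j \<in> J_le N xs us i"
  shows "us j y \<le> Max ((\<lambda>j. us j y) ` J_le N xs us i)"
  using assms by (intro Max_ge finite_imageI) (auto simp: J_le_def)

theorem mainTheorem3:
  fixes \<Omega> :: "'a::euclidean_space set" and u :: "'a \<Rightarrow> real"
    and K :: nat and Rg :: "nat \<Rightarrow> 'a set" and pc :: "nat \<Rightarrow> 'a \<Rightarrow> real"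
    and N :: nat and xs :: "nat \<Rightarrow> 'a" and \<Gamma> :: "nat \<Rightarrow> 'a set"
    and us :: "nat \<Rightarrow> 'a \<Rightarrow> real" and \<alpha> \<beta> :: nat
  assumes "convex \<Omega>" and "polyhedron \<Omega>"
    and "pwa_on \<Omega> u K Rg pc"
    and "\<And>i. i < N \<Longrightarrow> uo_region K Rg pc (\<Gamma> i) \<and> xs i \<in> interior (\<Gamma> i) \<and>
              (\<exists>k<K. \<Gamma> i \<subseteq> Rg k \<and> us i = pc k)"
    and "\<alpha> < N" and "\<beta> < N"
    and "Max ((\<lambda>j. us j (xs \<beta>)) ` J_le N xs us \<alpha>) < u (xs \<beta>)"
    and "u (xs \<beta>) = us \<beta> (xs \<beta>)"
  shows "\<exists>xg ug. (\<exists>t::real. 0 < t \<and> t < 1 \<and> xg = t *\<^sub>R xs \<alpha> + (1 - t) *\<^sub>R xs \<beta>) \<and>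
           (\<exists>k<K. ug = pc k) \<and> u xg = ug xg \<and>
           ug (xs \<alpha>) \<le> us \<alpha> (xs \<alpha>) \<and> ug (xs \<beta>) \<ge> us \<beta> (xs \<beta>) \<and>
           Max ((\<lambda>j. (us(N := ug)) j ((xs(N := xg)) \<beta>))
                  ` J_le (Suc N) (xs(N := xg)) (us(N := ug)) \<alpha>)
             \<ge> us \<beta> (xs \<beta>)"
proof -
  have cover: "(\<Union>k<K. Rg k) = \<Omega>"
    and piece: "\<And>k x. k < K \<Longrightarrow> x \<in> Rg k \<Longrightarrow> u x = pc k x"
    and piece_affine: "\<And>k. k < K \<Longrightarrow> affine_fun (pc k)"
    using assms(3) unfolding pwa_on_def by blast+
  have sample: "xs i \<in> \<Omega> \<and> us i (xs i) = u (xs i)" if "i < N" for i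
  proof -
    note i = that
    obtain k where k: "k < K" "\<Gamma> i \<subseteq> Rg k" "us i = pc k" "xs i \<in> interior (\<Gamma> i)"
      using assms(4)[OF i] by blast
    then have "xs i \<in> Rg k" using interior_subset by blast
    then show ?thesis using k(1,3) cover piece by auto
  qed
  obtain k\<^sub>\<alpha> where k\<^sub>\<alpha>: "k\<^sub>\<alpha> < K" "\<Gamma> \<alpha> \<subseteq> Rg k\<^sub>\<alpha>" "us \<alpha> = pc k\<^sub>\<alpha>"
    and "xs \<alpha> \<in> interior (\<Gamma> \<alpha>)" using assms(4)[OF assms(5)] by blast
  then obtain t\<^sub>0 where t\<^sub>0: "0 < t\<^sub>0" "t\<^sub>0 < 1" "t\<^sub>0 *\<^sub>R xs \<alpha> + (1 - t\<^sub>0) *\<^sub>R xs \<beta> \<in> Rg k\<^sub>\<alpha>"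
    using interior_contains_segment_point by blast
  have "\<alpha> \<in> J_le N xs us \<alpha>" using assms(5) by (simp add: J_le_def)
  then have "us \<alpha> (xs \<beta>) < u (xs \<beta>)" using J_le_Max_ge assms(7) by (metis le_less_trans)
  then have "u (t\<^sub>0 *\<^sub>R xs \<alpha> + (1 - t\<^sub>0) *\<^sub>R xs \<beta>) < t\<^sub>0 * u (xs \<alpha>) + (1 - t\<^sub>0) * u (xs \<beta>)"
    using piece[OF k\<^sub>\<alpha>(1) t\<^sub>0(3)] affine_fun_convex_comb[OF piece_affine[OF k\<^sub>\<alpha>(1)]] t\<^sub>0(2)
      sample[OF assms(5)] k\<^sub>\<alpha>(3) by simp
  then obtain t k where t: "0 < t" "t < 1" and k: "k < K" "t *\<^sub>R xs \<alpha> + (1 - t) *\<^sub>R xs \<beta> \<in> Rg k"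
    and ends: "pc k (xs \<alpha>) < u (xs \<alpha>)" "u (xs \<beta>) \<le> pc k (xs \<beta>)"
    using pwa_below_chord_imp_crossing_piece[OF assms(3,1)] t\<^sub>0(1,2) sample assms(5,6) by blast
  define xg where "xg = t *\<^sub>R xs \<alpha> + (1 - t) *\<^sub>R xs \<beta>"
  have "N \<in> J_le (Suc N) (xs(N := xg)) (us(N := pc k)) \<alpha>"
    using ends(1) sample[OF assms(5)] assms(5) by (simp add: J_le_def)
  then have "pc k (xs \<beta>) \<le> Max ((\<lambda>j. (us(N := pc k)) j ((xs(N := xg)) \<beta>))
                  ` J_le (Suc N) (xs(N := xg)) (us(N := pc k)) \<alpha>)"
    using J_le_Max_ge[where y = "(xs(N := xg)) \<beta>"] assms(6) by fastforce
  moreover have "u xg = pc k xg" using piece k unfolding xg_def by blast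
  ultimately show ?thesis
    using t k(1) ends sample[OF assms(5)] assms(8) unfolding xg_def
    by (intro exI[of _ xg] exI[of _ "pc k"] conjI) (auto simp: xg_def)
qed

end
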